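(* Let $\mathcal{H}\subseteq\{0,1\}^{\mathcal{X}}$ with $|\mathcal{H}|>2$. For any learning algorithm $\hat h_n$ there exists a realizable distribution $P$ such that $\mathbf{E}[\mathrm{er}_P(\hat h_n)]\ge 2^{-n-2}$ for infinitely many $n$. In particular, $\mathcal{H}$ is not learnable at rate faster than $e^{-n}$.
   Context: $\mathrm{er}_P(h)=P\{(x,y):h(x)\ne y\}$ for a distribution $P$ on $\mathcal{X}\times\{0,1\}$; $P$ is realizable if $\inf_{h\in\mathcal{H}}\mathrm{er}_P(h)=0$. A learning algorithm is a sequence of (universally measurable) maps $H_n:(\mathcal{X}\times\{0,1\})^n\times\mathcal{X}\to\{0,1\}$ with $\hat h_n(x)=H_n((X_1,Y_1),\ldots,(X_n,Y_n),x)$ for i.i.d. $(X_i,Y_i)\sim P$. "Not learnable at rate faster than $R$" means that for every learning algorithm there exist a realizable $P$ and $C,c>0$ with $\mathbf{E}[\mathrm{er}_P(\hat h_n)]\ge CR(cn)$ for infinitely many $n$. *)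

theory Defs
  imports "HOL-Probability.Probability"
begin

text \<open>Instance space: a measurable space M on the type 'a (X = space M).
  Labels: bool, with the discrete sigma-algebra.\<close>

definition univ_measurable :: "'a measure \<Rightarrow> 'b measure \<Rightarrow> ('a \<Rightarrow> 'b) \<Rightarrow> bool" where
  "univ_measurable M N f \<longleftrightarrow>
     (\<forall>\<mu>. sets \<mu> = sets M \<and> prob_space \<mu> \<longrightarrow> f \<in> measurable (completion \<mu>) N)"

definition is_distribution :: "'a measure \<Rightarrow> ('a \<times> bool) measure \<Rightarrow> bool" where
  "is_distribution M P \<longleftrightarrow> prob_space P \<and> sets P = sets (M \<Otimes>\<^sub>M count_space UNIV)"

text \<open>Error rate er_P(h) = P{(x,y). h x \<noteq> y} (w.r.t. the completion of P, so that
  it makes sense for universally measurable h).\<close>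
definition er :: "('a \<times> bool) measure \<Rightarrow> ('a \<Rightarrow> bool) \<Rightarrow> real" where
  "er P h = measure (completion P) {z \<in> space P. h (fst z) \<noteq> snd z}"

definition realizable :: "('a \<Rightarrow> bool) set \<Rightarrow> ('a \<times> bool) measure \<Rightarrow> bool" where
  "realizable H P \<longleftrightarrow> (INF h\<in>H. er P h) = 0"

text \<open>A learning algorithm: for each n a universally measurable map
  H_n : (X x {0,1})^n x X \<rightarrow> {0,1}; samples are functions on {..<n}.\<close>
definition learning_algorithm ::
    "'a measure \<Rightarrow> (nat \<Rightarrow> (nat \<Rightarrow> 'a \<times> bool) \<Rightarrow> 'a \<Rightarrow> bool) \<Rightarrow> bool" where
  "learning_algorithm M A \<longleftrightarrow>
     (\<forall>n. univ_measurable
            (PiM {..<n} (\<lambda>_. M \<Otimes>\<^sub>M count_space UNIV) \<Otimes>\<^sub>M M)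
            (count_space UNIV) (\<lambda>(S, x). A n S x))"

definition expected_error ::
    "('a \<times> bool) measure \<Rightarrow> (nat \<Rightarrow> (nat \<Rightarrow> 'a \<times> bool) \<Rightarrow> 'a \<Rightarrow> bool) \<Rightarrow> nat \<Rightarrow> real" where
  "expected_error P A n =
     (\<integral>S. er P (A n S) \<partial>(completion (PiM {..<n} (\<lambda>_. P))))"

definition not_learnable_faster ::
    "'a measure \<Rightarrow> ('a \<Rightarrow> bool) set \<Rightarrow> (real \<Rightarrow> real) \<Rightarrow> bool" where
  "not_learnable_faster M H R \<longleftrightarrow>
     (\<forall>A. learning_algorithm M A \<longrightarrow>
        (\<exists>P. is_distribution M P \<and> realizable H P \<and>
           (\<exists>C>0. \<exists>c>0. \<exists>\<^sub>\<infinity>n. expected_error P A n \<ge> C * R (c * real n))))"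

end

theory Submission
  imports Defs
begin

(* Take h1, h2 \<in> H and points x, x' with h1 x = h2 x but h1 x' \<noteq> h2 x'
   (three distinct Boolean functions cannot pairwise be either equal or complementary).
   For each choice y' \<in> {h1 x', h2 x'}, the uniform distribution on {(x, h1 x), (x', y')}
   is realizable. With probability 2^-n the sample consists of n copies of (x, h1 x), and then
   the prediction at x' does not depend on y'; for one of the two choices it is wrong for
   infinitely many n, which costs error 1/2 on an event of probability 2^-n.
   Universal measurability of the learner is what makes its output constant on a measurable
   neighbourhood of each point, so that these error events are measurable. *)

abbreviation labelled :: "'a measure \<Rightarrow> ('a \<times> bool) measure" where
  "labelled M \<equiv> M \<Otimes>\<^sub>M count_space UNIV"

text \<open>p behaves like an atom of mass at least c, although {p} need not be measurable.\<close>

definition point_mass_ge :: "'b measure \<Rightarrow> 'b \<Rightarrow> ennreal \<Rightarrow> bool" where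
  "point_mass_ge K p c \<longleftrightarrow> (\<forall>Q\<in>sets K. p \<in> Q \<longrightarrow> c \<le> emeasure K Q)"

lemma point_mass_ge_return: "p \<in> space K \<Longrightarrow> point_mass_ge (return K p) p 1"
  by (simp add: point_mass_ge_def emeasure_return)

lemma point_mass_ge_completionE:
  assumes "point_mass_ge K p c" "c > 0" "B \<in> sets (completion K)" "p \<in> B"
  obtains S where "S \<in> sets K" "p \<in> S" "S \<subseteq> B"
proof -
  obtain S N N' where B: "B = S \<union> N" "N \<subseteq> N'" "N' \<in> null_sets K" "S \<in> sets K"
    using sets_completionE[OF assms(3)] by metis
  have "p \<notin> N'"
  proof
    assume "p \<in> N'"
    then have "c \<le> 0"
      using assms(1) B(3) by (auto simp: point_mass_ge_def null_sets_def)
    with assms(2) show False by simp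
  qed
  then show ?thesis
    using that B assms(4) by blast
qed

lemma point_mass_ge_completion:
  assumes "point_mass_ge K p c" "c > 0" "B \<in> sets (completion K)" "p \<in> B"
  shows "c \<le> emeasure (completion K) B"
proof -
  obtain S where S: "S \<in> sets K" "p \<in> S" "S \<subseteq> B"
    using point_mass_ge_completionE[OF assms] .
  then have "c \<le> emeasure (completion K) S"
    using assms(1) by (simp add: point_mass_ge_def)
  also have "\<dots> \<le> emeasure (completion K) B"
    using S assms(3) by (intro emeasure_mono) auto
  finally show ?thesis .
qed

lemma point_mass_ge_pair:
  assumes "point_mass_ge M1 p1 a" "point_mass_ge M2 p2 b" "sigma_finite_measure M2"
    and "p2 \<in> space M2"
  shows "point_mass_ge (M1 \<Otimes>\<^sub>M M2) (p1, p2) (a * b)"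
  unfolding point_mass_ge_def
proof (intro ballI impI)
  fix Z assume Z: "Z \<in> sets (M1 \<Otimes>\<^sub>M M2)" and pZ: "(p1, p2) \<in> Z"
  interpret sigma_finite_measure M2 by fact
  let ?E = "(\<lambda>s. (s, p2)) -` Z \<inter> space M1"
  have E: "?E \<in> sets M1"
    using measurable_sets[OF measurable_Pair2'[OF assms(4)] Z] .
  have "p1 \<in> space M1"
    using sets.sets_into_space[OF Z] pZ by (auto simp: space_pair_measure)
  then have "a * b \<le> emeasure M1 ?E * b"
    using assms(1) E pZ by (intro mult_right_mono) (auto simp: point_mass_ge_def)
  also have "\<dots> = (\<integral>\<^sup>+s. b * indicator ?E s \<partial>M1)"
    using E by (simp add: nn_integral_cmult_indicator mult.commute)
  also have "\<dots> \<le> (\<integral>\<^sup>+s. emeasure M2 (Pair s -` Z) \<partial>M1)"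
    using assms(2) sets_Pair1[OF Z]
    by (intro nn_integral_mono) (auto simp: point_mass_ge_def indicator_def)
  also have "\<dots> = emeasure (M1 \<Otimes>\<^sub>M M2) Z"
    using Z by (rule emeasure_pair_measure_alt[symmetric])
  finally show "a * b \<le> emeasure (M1 \<Otimes>\<^sub>M M2) Z" .
qed

lemma point_mass_ge_PiM_const:
  assumes P: "prob_space P" "point_mass_ge P p c" "p \<in> space P"
  shows "point_mass_ge (PiM {..<n} (\<lambda>_. P)) (\<lambda>i\<in>{..<n}. p) (c ^ n)"
proof (induction n)
  case 0
  interpret prob_space "PiM {..<0::nat} (\<lambda>_. P)"
    using P by (intro prob_space_PiM) auto
  show ?case
    unfolding point_mass_ge_def
  proof (intro ballI impI)
    fix Q assume Q: "Q \<in> sets (PiM {..<0::nat} (\<lambda>_. P))" "(\<lambda>i\<in>{..<0::nat}. p) \<in> Q"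
    have "Q = space (PiM {..<0::nat} (\<lambda>_. P))"
      using sets.sets_into_space[OF Q(1)] Q(2) by (auto simp: space_PiM_empty restrict_def)
    then show "c ^ 0 \<le> emeasure (PiM {..<0::nat} (\<lambda>_. P)) Q"
      using emeasure_space_1 by simp
  qed
next
  case (Suc n)
  let ?Pn = "PiM {..<n} (\<lambda>_. P)"
  let ?g = "\<lambda>(x, X). X(n := x)"
  have eq: "PiM {..<Suc n} (\<lambda>_. P) = distr (P \<Otimes>\<^sub>M ?Pn) (PiM {..<Suc n} (\<lambda>_. P)) ?g"
    using distr_pair_PiM_eq_PiM[of "{..<n}" "\<lambda>_. P" n] P by (simp add: lessThan_Suc)
  have g: "?g \<in> P \<Otimes>\<^sub>M ?Pn \<rightarrow>\<^sub>M PiM {..<Suc n} (\<lambda>_. P)"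
    unfolding lessThan_Suc by measurable
  interpret Pn: prob_space ?Pn
    using P by (intro prob_space_PiM) auto
  have pair: "point_mass_ge (P \<Otimes>\<^sub>M ?Pn) (p, \<lambda>i\<in>{..<n}. p) (c * c ^ n)"
    using P by (intro point_mass_ge_pair Suc.IH) (auto simp: space_PiM Pn.sigma_finite_measure)
  have "?g (p, \<lambda>i\<in>{..<n}. p) = (\<lambda>i\<in>{..<Suc n}. p)"
    by (auto simp: fun_eq_iff)
  then show ?case
    using pair P(3) measurable_sets[OF g] unfolding point_mass_ge_def
    by (subst (1 2) eq) (auto simp: emeasure_distr[OF g] space_pair_measure space_PiM)
qed

lemma univ_measurable_locally_constant:
  assumes f: "univ_measurable K (count_space UNIV) f" and p: "p \<in> space K"
  obtains G where "G \<in> sets K" "p \<in> G" "\<And>q. q \<in> G \<Longrightarrow> f q = f p"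
proof -
  \<comment> \<open>Universal measurability at the Dirac measure in p: the level set of f through p is
    measurable for its completion, so it contains a measurable set around p.\<close>
  have "f \<in> completion (return K p) \<rightarrow>\<^sub>M count_space UNIV"
    using f prob_space_return[OF p] by (simp add: univ_measurable_def)
  from measurable_sets[OF this, of "{f p}"]
  have level_set: "f -` {f p} \<inter> space K \<in> sets (completion (return K p))"
    by simp
  obtain G where "G \<in> sets (return K p)" "p \<in> G" "G \<subseteq> f -` {f p} \<inter> space K"
    using point_mass_ge_completionE[OF point_mass_ge_return[OF p] _ level_set] p by auto
  then show ?thesis
    using that by auto
qed

lemma distr_Pair_return:
  assumes Q: "prob_space Q" and z: "z \<in> space M"
  shows "distr Q (Q \<Otimes>\<^sub>M return M z) (\<lambda>s. (s, z)) = Q \<Otimes>\<^sub>M return M z"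
proof (rule measure_eqI)
  fix Z assume "Z \<in> sets (distr Q (Q \<Otimes>\<^sub>M return M z) (\<lambda>s. (s, z)))"
  then have Z: "Z \<in> sets (Q \<Otimes>\<^sub>M return M z)" by simp
  interpret R: prob_space "return M z"
    using z by (rule prob_space_return)
  have f: "(\<lambda>s. (s, z)) \<in> Q \<rightarrow>\<^sub>M Q \<Otimes>\<^sub>M return M z"
    using z by (intro measurable_Pair2') simp
  have "emeasure (Q \<Otimes>\<^sub>M return M z) Z = (\<integral>\<^sup>+s. emeasure (return M z) (Pair s -` Z) \<partial>Q)"
    using Z by (rule R.emeasure_pair_measure_alt)
  also have "\<dots> = (\<integral>\<^sup>+s. indicator ((\<lambda>s. (s, z)) -` Z \<inter> space Q) s \<partial>Q)"
  proof (rule nn_integral_cong)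
    fix s assume "s \<in> space Q"
    moreover have "Pair s -` Z \<in> sets M"
      using sets_Pair1[OF Z] by simp
    ultimately show "emeasure (return M z) (Pair s -` Z) = indicator ((\<lambda>s. (s, z)) -` Z \<inter> space Q) s"
      by (simp add: indicator_def)
  qed
  also have "\<dots> = emeasure (distr Q (Q \<Otimes>\<^sub>M return M z) (\<lambda>s. (s, z))) Z"
    using measurable_sets[OF f Z] by (simp add: emeasure_distr[OF f Z])
  finally show "emeasure (distr Q (Q \<Otimes>\<^sub>M return M z) (\<lambda>s. (s, z))) Z
      = emeasure (Q \<Otimes>\<^sub>M return M z) Z"
    by simp
qed simp

lemma univ_measurable_slice:
  assumes f: "univ_measurable (K \<Otimes>\<^sub>M M) (count_space UNIV) f"
    and Q: "prob_space Q" "sets Q = sets K" and z: "z \<in> space M"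
  shows "(\<lambda>s. f (s, z)) \<in> completion Q \<rightarrow>\<^sub>M count_space UNIV"
proof -
  let ?\<mu> = "Q \<Otimes>\<^sub>M return M z"
  have "prob_space ?\<mu>"
    using Q(1) prob_space_return[OF z] by (rule prob_space_pair)
  moreover have "sets ?\<mu> = sets (K \<Otimes>\<^sub>M M)"
    using Q by (intro sets_pair_measure_cong) auto
  ultimately have f': "f \<in> completion ?\<mu> \<rightarrow>\<^sub>M count_space UNIV"
    using f by (simp add: univ_measurable_def)
  have Pair: "(\<lambda>s. (s, z)) \<in> Q \<rightarrow>\<^sub>M ?\<mu>"
    using z by (intro measurable_Pair2') simp
  have "(\<lambda>s. (s, z)) \<in> completion Q \<rightarrow>\<^sub>M completion ?\<mu>"
    using distr_completion[OF Pair] distr_Pair_return[OF Q(1) z]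
    by (intro completion.measurable_completion2 measurable_completion[OF Pair]) simp
  from measurable_comp[OF this f'] show ?thesis
    by (simp add: comp_def)
qed

text \<open>The default value a makes the map land in space N, hence measurable from the count space.\<close>

definition two_point :: "'b measure \<Rightarrow> 'b \<Rightarrow> 'b \<Rightarrow> 'b measure" where
  "two_point N a b = distr (measure_pmf (pmf_of_set {a, b})) N (\<lambda>z. if z \<in> space N then z else a)"

lemma sets_two_point [simp, measurable_cong]: "sets (two_point N a b) = sets N"
  by (simp add: two_point_def)

lemma space_two_point [simp]: "space (two_point N a b) = space N"
  by (simp add: two_point_def)

lemma prob_space_two_point: "a \<in> space N \<Longrightarrow> prob_space (two_point N a b)"
  unfolding two_point_def
  by (intro prob_space.prob_space_distr) (auto simp: measure_pmf.prob_space_axioms)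

lemma emeasure_two_point:
  assumes "a \<in> space N" "b \<in> space N" "a \<noteq> b" "Q \<in> sets N"
  shows "emeasure (two_point N a b) Q = ennreal ((of_bool (a \<in> Q) + of_bool (b \<in> Q)) / 2)"
proof -
  let ?f = "\<lambda>z. if z \<in> space N then z else a"
  have "emeasure (two_point N a b) Q = emeasure (measure_pmf (pmf_of_set {a, b})) (?f -` Q)"
    unfolding two_point_def using assms by (subst emeasure_distr) auto
  also have "\<dots> = card ({a, b} \<inter> ?f -` Q) / card {a, b}"
    by (rule emeasure_pmf_of_set) auto
  also have "{a, b} \<inter> ?f -` Q = {a, b} \<inter> Q"
    using assms(1,2) by auto
  finally show ?thesis
    using assms(3)
    by (cases "a \<in> Q"; cases "b \<in> Q")
      (simp_all add: divide_ennreal ennreal_of_nat_eq_real_of_nat Int_insert_left)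
qed

lemma point_mass_ge_two_point:
  assumes "a \<in> space N" "b \<in> space N" "a \<noteq> b"
  shows "point_mass_ge (two_point N a b) a (ennreal (1/2))"
  unfolding point_mass_ge_def
proof (intro ballI impI)
  fix Q assume "Q \<in> sets (two_point N a b)" "a \<in> Q"
  then have "emeasure (two_point N a b) Q = ennreal ((1 + of_bool (b \<in> Q)) / 2)"
    using emeasure_two_point[OF assms, of Q] by simp
  then show "ennreal (1/2) \<le> emeasure (two_point N a b) Q"
    by (simp only:) (rule ennreal_leI, simp)
qed

lemma measure_completion_two_point:
  assumes ab: "a \<in> space N" "b \<in> space N" "a \<noteq> b" and B: "B \<subseteq> space N"
    and Ga: "Ga \<in> sets N" "a \<in> Ga" "Ga \<subseteq> B \<or> Ga \<inter> B = {}"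
    and Gb: "Gb \<in> sets N" "b \<in> Gb" "Gb \<subseteq> B \<or> Gb \<inter> B = {}"
  shows "measure (completion (two_point N a b)) B = (of_bool (a \<in> B) + of_bool (b \<in> B)) / 2"
proof -
  let ?P = "two_point N a b"
  define C where "C = \<Union>{G \<in> {Ga, Gb}. G \<subseteq> B}"
  have C: "C \<in> sets N" "C \<subseteq> B"
    using Ga Gb by (auto simp: C_def)
  have C_iff: "p \<in> C \<longleftrightarrow> p \<in> B" if "p \<in> {a, b}" for p
    using that Ga Gb by (auto simp: C_def)
  have "space N - Ga - Gb \<in> null_sets ?P"
    using Ga Gb emeasure_two_point[OF ab, of "space N - Ga - Gb"] by (auto simp: null_sets_def)
  moreover have "B - C \<subseteq> space N - Ga - Gb"
    using B Ga Gb by (auto simp: C_def)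
  ultimately have null: "B - C \<in> null_sets (completion ?P)"
    by (blast intro: null_sets_completion_subset null_sets_completionI)
  have B_eq: "B = C \<union> (B - C)"
    using C by blast
  have "measure (completion ?P) (C \<union> (B - C)) = measure (completion ?P) C"
    using C null by (intro measure_Un_null_set) auto
  then have "measure (completion ?P) B = measure ?P C"
    using C(1) B_eq by simp
  also have "\<dots> = (of_bool (a \<in> B) + of_bool (b \<in> B)) / 2"
    using emeasure_two_point[OF ab C(1)] C_iff by (simp add: measure_def)
  finally show ?thesis .
qed

lemma er_two_point:
  fixes M :: "'a measure" and g :: "'a \<Rightarrow> bool"
  assumes x: "x \<in> space M" "x' \<in> space M" "x \<noteq> x'"
    and U: "U \<in> sets M" "x \<in> U" "\<And>w. w \<in> U \<Longrightarrow> g w = g x"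
    and U': "U' \<in> sets M" "x' \<in> U'" "\<And>w. w \<in> U' \<Longrightarrow> g w = g x'"
  shows "er (two_point (labelled M) (x, y) (x', y')) g = (of_bool (g x \<noteq> y) + of_bool (g x' \<noteq> y')) / 2"
proof -
  let ?B = "{z \<in> space (labelled M). g (fst z) \<noteq> snd z}"
  have ab: "(x, y) \<in> space (labelled M)" "(x', y') \<in> space (labelled M)" "(x, y) \<noteq> (x', y')"
    using x by (auto simp: space_pair_measure)
  have "U \<subseteq> space M" "U' \<subseteq> space M"
    using U(1) U'(1) by (auto dest: sets.sets_into_space)
  then have decided: "U \<times> {y} \<subseteq> ?B \<or> U \<times> {y} \<inter> ?B = {}"
      "U' \<times> {y'} \<subseteq> ?B \<or> U' \<times> {y'} \<inter> ?B = {}"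
    using U(3) U'(3) by (auto simp: space_pair_measure)
  have nbhds: "U \<times> {y} \<in> sets (labelled M)" "U' \<times> {y'} \<in> sets (labelled M)"
    using U(1) U'(1) by (simp_all add: pair_measureI)
  have "er (two_point (labelled M) (x, y) (x', y')) g
      = (of_bool ((x, y) \<in> ?B) + of_bool ((x', y') \<in> ?B)) / 2"
    unfolding er_def space_two_point
    by (rule measure_completion_two_point[OF ab _ nbhds(1) _ decided(1) nbhds(2) _ decided(2)])
      (use U(2) U'(2) in auto)
  also have "\<dots> = (of_bool (g x \<noteq> y) + of_bool (g x' \<noteq> y')) / 2"
    using ab(1,2) by simp
  finally show ?thesis .
qed

lemma two_point_realizable:
  fixes M :: "'a measure" and H :: "('a \<Rightarrow> bool) set"
  assumes H: "H \<subseteq> measurable M (count_space UNIV)" "h \<in> H"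
    and x: "x \<in> space M" "x' \<in> space M" "x \<noteq> x'"
  shows "is_distribution M (two_point (labelled M) (x, h x) (x', h x'))"
    and "realizable H (two_point (labelled M) (x, h x) (x', h x'))"
proof -
  let ?P = "two_point (labelled M) (x, h x) (x', h x')"
  show "is_distribution M ?P"
    using x by (auto simp: is_distribution_def space_pair_measure intro: prob_space_two_point)
  have level_sets: "h -` {h z} \<inter> space M \<in> sets M" for z
    using H by (intro measurable_sets[of h M "count_space UNIV"]) auto
  have "er ?P h = (of_bool (h x \<noteq> h x) + of_bool (h x' \<noteq> h x')) / 2"
    by (rule er_two_point[OF x level_sets[of x] _ _ level_sets[of x']]) (use x in auto)
  then have "er ?P h = 0"
    by simp
  moreover have er_nonneg: "er ?P g \<ge> 0" for g
    unfolding er_def by (rule measure_nonneg)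
  moreover have "bdd_below (er ?P ` H)"
    using er_nonneg by (intro bdd_belowI2)
  ultimately have "(INF g\<in>H. er ?P g) \<le> 0"
    using H(2) by (intro cINF_lower2[of _ _ h]) auto
  moreover have "(INF g\<in>H. er ?P g) \<ge> 0"
    using H(2) er_nonneg by (intro cINF_greatest) auto
  ultimately have "(INF g\<in>H. er ?P g) = 0"
    by (rule antisym)
  then show "realizable H ?P"
    by (simp add: realizable_def)
qed

lemma learning_algorithm_locally_constant:
  assumes A: "learning_algorithm M A" and S: "S \<in> space (PiM {..<n} (\<lambda>_. labelled M))"
    and z: "z \<in> space M"
  obtains U where "U \<in> sets M" "z \<in> U" "\<And>w. w \<in> U \<Longrightarrow> A n S w = A n S z"
proof -
  have "univ_measurable (PiM {..<n} (\<lambda>_. labelled M) \<Otimes>\<^sub>M M) (count_space UNIV)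
      (\<lambda>(S, x). A n S x)"
    using A by (simp add: learning_algorithm_def)
  moreover have "(S, z) \<in> space (PiM {..<n} (\<lambda>_. labelled M) \<Otimes>\<^sub>M M)"
    using S z by (simp add: space_pair_measure)
  ultimately obtain G where G: "G \<in> sets (PiM {..<n} (\<lambda>_. labelled M) \<Otimes>\<^sub>M M)" "(S, z) \<in> G"
      "\<And>q. q \<in> G \<Longrightarrow> (case q of (S, x) \<Rightarrow> A n S x) = A n S z"
    by (rule univ_measurable_locally_constant) auto
  show ?thesis
    using G sets_Pair1[OF G(1)] by (intro that[of "Pair S -` G"]) auto
qed

lemma learning_algorithm_prediction_measurable:
  assumes A: "learning_algorithm M A" and Q: "prob_space Q" "sets Q = sets (PiM {..<n} (\<lambda>_. labelled M))"
    and z: "z \<in> space M"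
  shows "(\<lambda>S. A n S z) \<in> completion Q \<rightarrow>\<^sub>M count_space UNIV"
  using univ_measurable_slice[OF _ Q z, of "\<lambda>(S, x). A n S x"] A
  by (simp add: learning_algorithm_def)

lemma expected_error_two_point:
  fixes M :: "'a measure" and y y' :: bool and n :: nat
  assumes A: "learning_algorithm M A" and x: "x \<in> space M" "x' \<in> space M" "x \<noteq> x'"
  defines "P \<equiv> two_point (labelled M) (x, y) (x', y')"
  defines "\<mu> \<equiv> completion (PiM {..<n} (\<lambda>_. P))"
  shows "expected_error P A n
    = (measure \<mu> {S \<in> space \<mu>. A n S x \<noteq> y} + measure \<mu> {S \<in> space \<mu>. A n S x' \<noteq> y'}) / 2"
proof -
  have "prob_space P"
    using x unfolding P_def by (intro prob_space_two_point) (simp add: space_pair_measure)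
  then interpret prob_space \<mu>
    unfolding \<mu>_def by (intro prob_space.prob_space_completion prob_space_PiM)
  have space: "space \<mu> = space (PiM {..<n} (\<lambda>_. labelled M))"
    unfolding \<mu>_def P_def by (simp add: space_PiM)
  have "(\<lambda>S. A n S z) \<in> \<mu> \<rightarrow>\<^sub>M count_space UNIV" if "z \<in> space M" for z
    unfolding \<mu>_def
    by (intro learning_algorithm_prediction_measurable[OF A] that prob_space_PiM \<open>prob_space P\<close>
        sets_PiM_cong) (simp_all add: P_def)
  then have E: "{S \<in> space \<mu>. A n S z \<noteq> t} \<in> sets \<mu>" if "z \<in> space M" for z t
    using that by measurable
  have er: "er P (A n S) = (indicator {S \<in> space \<mu>. A n S x \<noteq> y} S
      + indicator {S \<in> space \<mu>. A n S x' \<noteq> y'} S) / 2" if S: "S \<in> space \<mu>" for S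
  proof -
    obtain U U' where "U \<in> sets M" "x \<in> U" "\<And>w. w \<in> U \<Longrightarrow> A n S w = A n S x"
      "U' \<in> sets M" "x' \<in> U'" "\<And>w. w \<in> U' \<Longrightarrow> A n S w = A n S x'"
      using learning_algorithm_locally_constant[OF A, of S] S x unfolding space by metis
    from er_two_point[OF x this] show ?thesis
      using S by (simp add: P_def indicator_def)
  qed
  have "expected_error P A n = (\<integral>S. (indicator {S \<in> space \<mu>. A n S x \<noteq> y} S
      + indicator {S \<in> space \<mu>. A n S x' \<noteq> y'} S) / 2 \<partial>\<mu>)"
    unfolding expected_error_def \<mu>_def[symmetric] using er by (intro Bochner_Integration.integral_cong) auto
  also have "\<dots>
      = (measure \<mu> {S \<in> space \<mu>. A n S x \<noteq> y} + measure \<mu> {S \<in> space \<mu>. A n S x' \<noteq> y'}) / 2"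
    using E x by (simp add: emeasure_eq_measure Int_absorb2)
  finally show ?thesis .
qed

lemma expected_error_two_point_lower_bound:
  fixes M :: "'a measure" and y y' :: bool
  assumes A: "learning_algorithm M A" and x: "x \<in> space M" "x' \<in> space M" "x \<noteq> x'"
    and wrong: "A n (\<lambda>i\<in>{..<n}. (x, y)) x' \<noteq> y'"
  shows "(1/2) ^ Suc n \<le> expected_error (two_point (labelled M) (x, y) (x', y')) A n"
proof -
  let ?P = "two_point (labelled M) (x, y) (x', y')"
  let ?\<mu> = "completion (PiM {..<n} (\<lambda>_. ?P))"
  let ?S\<^sub>0 = "\<lambda>i\<in>{..<n}. (x, y)"
  let ?E = "{S \<in> space ?\<mu>. A n S x' \<noteq> y'}"
  have xy: "(x, y) \<in> space (labelled M)" "(x', y') \<in> space (labelled M)" "(x, y) \<noteq> (x', y')"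
    using x by (auto simp: space_pair_measure)
  then have P: "prob_space ?P"
    by (intro prob_space_two_point)
  interpret prob_space ?\<mu>
    using P by (intro prob_space.prob_space_completion prob_space_PiM)
  have "(\<lambda>S. A n S x') \<in> ?\<mu> \<rightarrow>\<^sub>M count_space UNIV"
    using x(2) by (intro learning_algorithm_prediction_measurable[OF A] prob_space_PiM P sets_PiM_cong) simp_all
  then have E: "?E \<in> sets ?\<mu>"
    by measurable
  have "?S\<^sub>0 \<in> ?E"
    using wrong xy(1) by (simp add: space_PiM)
  moreover have "point_mass_ge (PiM {..<n} (\<lambda>_. ?P)) ?S\<^sub>0 (ennreal (1/2) ^ n)"
    using xy by (intro point_mass_ge_PiM_const P point_mass_ge_two_point) simp_all
  moreover have "0 < ennreal (1/2) ^ n"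
    by (subst ennreal_power) simp_all
  ultimately have "ennreal (1/2) ^ n \<le> emeasure ?\<mu> ?E"
    by (intro point_mass_ge_completion[OF _ _ E])
  then have "ennreal ((1/2) ^ n) \<le> ennreal (measure ?\<mu> ?E)"
    by (subst ennreal_power[symmetric]) (simp_all add: emeasure_eq_measure)
  then have "(1/2) ^ n \<le> measure ?\<mu> ?E"
    by (simp add: ennreal_le_iff)
  then have "(1/2) ^ Suc n \<le> (measure ?\<mu> {S \<in> space ?\<mu>. A n S x \<noteq> y} + measure ?\<mu> ?E) / 2"
    by (simp add: add_increasing)
  also have "\<dots> = expected_error ?P A n"
    by (rule expected_error_two_point[OF A x, symmetric])
  finally show ?thesis .
qed

lemma obtain_agreeing_disagreeing_pair:
  fixes H :: "('a \<Rightarrow> bool) set"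
  assumes ext: "H \<subseteq> extensional X" and three: "infinite H \<or> card H > 2"
  obtains h h' x x' where "h \<in> H" "h' \<in> H" "x \<in> X" "x' \<in> X" "h x = h' x" "h x' \<noteq> h' x'"
proof (rule ccontr)
  assume "\<not> thesis"
  with that have opposite: "f z \<noteq> g z" if "f \<in> H" "g \<in> H" "f \<noteq> g" "z \<in> X" for f g z
    using that ext extensionalityI[of f X g] by blast
  obtain T where "T \<subseteq> H" "card T = 3"
  proof (cases "finite H")
    case True
    with three have "3 \<le> card H" by simp
    then show ?thesis
      using obtain_subset_with_card_n that by metis
  next
    case False
    then show ?thesis
      using infinite_arbitrarily_large that by metis
  qed
  then obtain a b c where abc: "a \<in> H" "b \<in> H" "c \<in> H" "a \<noteq> b" "a \<noteq> c" "b \<noteq> c"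
    by (auto simp: card_3_iff)
  have "b = c"
    using abc opposite[of a b] opposite[of a c] ext by (intro extensionalityI[of b X c]) auto
  with abc show False by simp
qed

lemma frequently_ne_either:
  fixes b :: "nat \<Rightarrow> 'b"
  assumes "u \<noteq> v"
  shows "(\<exists>\<^sub>\<infinity>n. b n \<noteq> u) \<or> (\<exists>\<^sub>\<infinity>n. b n \<noteq> v)"
proof (rule ccontr)
  assume "\<not> ?thesis"
  then have "\<forall>\<^sub>F n in sequentially. b n = u \<and> b n = v"
    by (simp add: not_frequently eventually_conj_iff cofinite_eq_sequentially)
  then have "\<forall>\<^sub>F n in sequentially. False"
    by (rule eventually_mono) (use assms in auto)
  then show False
    by simp
qed

lemma two_powr_le_half_power: "2 powr (- real n - 2) \<le> (1/2 :: real) ^ Suc n"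
proof -
  have "2 powr (- real n - 2) = 1 / 2 powr real (n + 2)"
    by (simp add: powr_minus_divide[symmetric] algebra_simps)
  also have "\<dots> = 1 / 2 ^ (n + 2)"
    by (simp only: powr_realpow[of 2 "n + 2", simplified zero_less_numeral])
  also have "\<dots> = (1/2 :: real) ^ (n + 2)"
    by (simp add: power_one_over)
  also have "\<dots> \<le> (1/2) ^ Suc n"
    by (rule power_decreasing) auto
  finally show ?thesis .
qed

lemma two_powr_eq_exp: "2 powr (- real n - 2) = 1/4 * exp (- (ln 2 * real n))"
proof -
  have "exp (- (ln 2 * real n)) = 2 powr (- real n)"
    by (simp add: powr_def)
  moreover have "2 powr (- real n - 2) = 2 powr (- real n) / 2 powr 2"
    by (rule powr_diff)
  ultimately show ?thesis
    by simp
qed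

lemma hard_two_point_distribution:
  fixes M :: "'a measure" and H :: "('a \<Rightarrow> bool) set"
  assumes H: "H \<subseteq> measurable M (count_space UNIV)" "H \<subseteq> extensional (space M)"
      "infinite H \<or> card H > 2"
    and A: "learning_algorithm M A"
  shows "\<exists>P. is_distribution M P \<and> realizable H P \<and>
    (\<exists>\<^sub>\<infinity>n. expected_error P A n \<ge> 2 powr (- real n - 2))"
proof -
  obtain h\<^sub>1 h\<^sub>2 x x' where h: "h\<^sub>1 \<in> H" "h\<^sub>2 \<in> H" "x \<in> space M" "x' \<in> space M"
    "h\<^sub>1 x = h\<^sub>2 x" "h\<^sub>1 x' \<noteq> h\<^sub>2 x'"
    using obtain_agreeing_disagreeing_pair[OF H(2,3)] .
  then have "x \<noteq> x'"
    by auto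
  let ?b = "\<lambda>n. A n (\<lambda>i\<in>{..<n}. (x, h\<^sub>1 x)) x'"
  obtain h where "h \<in> {h\<^sub>1, h\<^sub>2}" and wrong: "\<exists>\<^sub>\<infinity>n. ?b n \<noteq> h x'"
    using frequently_ne_either[OF h(6), of ?b] by blast
  then have "h \<in> H" "h x = h\<^sub>1 x"
    using h(1,2,5) by auto
  let ?P = "two_point (labelled M) (x, h x) (x', h x')"
  have "\<exists>\<^sub>\<infinity>n. expected_error ?P A n \<ge> 2 powr (- real n - 2)"
    using wrong
  proof (rule frequently_elim1)
    fix n assume "?b n \<noteq> h x'"
    then have "(1/2) ^ Suc n \<le> expected_error ?P A n"
      using expected_error_two_point_lower_bound[OF A h(3,4) \<open>x \<noteq> x'\<close>] \<open>h x = h\<^sub>1 x\<close>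
      by simp
    then show "expected_error ?P A n \<ge> 2 powr (- real n - 2)"
      using two_powr_le_half_power[of n] by linarith
  qed
  then show ?thesis
    using two_point_realizable[OF H(1) \<open>h \<in> H\<close> h(3,4) \<open>x \<noteq> x'\<close>] by blast
qed

lemma not_learnable_faster_exp:
  assumes "\<And>A. learning_algorithm M A \<Longrightarrow> \<exists>P. is_distribution M P \<and> realizable H P \<and>
    (\<exists>\<^sub>\<infinity>n. expected_error P A n \<ge> 2 powr (- real n - 2))"
  shows "not_learnable_faster M H (\<lambda>t. exp (- t))"
  unfolding not_learnable_faster_def
proof (intro allI impI)
  fix A assume "learning_algorithm M A"
  then obtain P where P: "is_distribution M P" "realizable H P"
    "\<exists>\<^sub>\<infinity>n. expected_error P A n \<ge> 2 powr (- real n - 2)"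
    using assms by blast
  then have "\<exists>\<^sub>\<infinity>n. expected_error P A n \<ge> 1/4 * exp (- (ln 2 * real n))"
    by (simp only: two_powr_eq_exp)
  moreover have "(0::real) < 1/4" "(0::real) < ln 2"
    by simp_all
  ultimately show "\<exists>P. is_distribution M P \<and> realizable H P \<and>
      (\<exists>C>0. \<exists>c>0. \<exists>\<^sub>\<infinity>n. expected_error P A n \<ge> C * exp (- (c * real n)))"
    using P(1,2) by blast
qed

theorem mainTheorem7:
  fixes M :: "'a measure" and H :: "('a \<Rightarrow> bool) set"
  assumes "H \<subseteq> measurable M (count_space UNIV)"
    and "H \<subseteq> extensional (space M)"
    and "infinite H \<or> card H > 2"
  shows "(\<forall>A. learning_algorithm M A \<longrightarrow>
            (\<exists>P. is_distribution M P \<and> realizable H P \<and>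
               (\<exists>\<^sub>\<infinity>n. expected_error P A n \<ge> 2 powr (- real n - 2))))
         \<and> not_learnable_faster M H (\<lambda>t. exp (- t))"
  by (intro conjI allI impI not_learnable_faster_exp hard_two_point_distribution[OF assms])

end
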